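(* Let $p\geq 3$ be a prime, $u\in\{1,\ldots,p-1\}$ and $s\geq 2$ an integer. Suppose that $\nu_{p}\big(A_{p,(p-1)(up^s-1)}(m)\big)\leq s$ for all integers $m>up^{s}$. Then for every integer $n>up^{s}$, $$\nu_{p}\big(A_{p,(p-1)(up^s-1)}(pn)\big)=\nu_{p}\big(A_{p,(p-1)(up^s-1)}(pn+1)\big)=\cdots=\nu_{p}\big(A_{p,(p-1)(up^s-1)}(pn+p-1)\big).$$
   Context: For an integer $m\geq 2$ and a positive integer $k$, the integers $A_{m,k}(n)$, $n\in\mathbb{N}=\{0,1,2,\ldots\}$, are defined by the formal power series identity $\prod_{i=0}^{\infty}\big(1-x^{m^{i}}\big)^{-k}=\sum_{n=0}^{\infty}A_{m,k}(n)x^{n}$. For a prime $p$, $\nu_p(n)$ denotes the $p$-adic valuation of the integer $n$, with $\nu_p(0)=+\infty$. *)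

theory Defs
  imports "HOL-Computational_Algebra.Computational_Algebra" "HOL-Library.Extended_Nat"
begin

(* Geometric series (1 - x^d)^(-1) = sum_j x^(d*j), over the integers.
   i.e. the inverse of 1 - x^d for d > 0. *)
definition geom :: "nat \<Rightarrow> int fps" where
  "geom d = Abs_fps (\<lambda>j. if d dvd j then 1 else 0)"

(* A_{m,k}(n): coefficient of x^n in prod_{i>=0} (1 - x^(m^i))^(-k).
   Factors with m^i > n are congruent to 1 mod x^(n+1), so for the n-th
   coefficient it suffices to take the finite product over i <= n
   (m >= 2 gives m^i > n for i > n). *)
definition A :: "nat \<Rightarrow> nat \<Rightarrow> nat \<Rightarrow> int" where
  "A m k n = fps_nth (\<Prod>i\<in>{..n}. geom (m ^ i) ^ k) n"

definition nu :: "nat \<Rightarrow> int \<Rightarrow> enat" where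
  "nu p x = (if x = 0 then \<infinity> else enat (multiplicity (int p) x))"

end

theory Submission
  imports Defs
begin

text \<open>
  Write k = (p - 1)(w - 1) with w = u p^s. The factor i = 0 of the product is
  (1 - x)^(-k) = (1 - x)^(p - 1) (1 - x)^(-(p - 1) w), so the generating function of A_{p,k}
  is (1 - x)^(p - 1) R(x) with R = (1 - x)^(-(p - 1) w) prod_{i >= 1} (1 - x^(p^i))^(-k).
  The coefficient of x^n in (1 - x)^(-p^s) is binom(p^s - 1 + n, n), a multiple of p^s whenever
  p does not divide n; as p^s divides w, every coefficient of R at an exponent prime to p is
  divisible by p^s (this is what lacunary_mod expresses). Since (1 - x)^(p - 1) has degree
  p - 1, it follows that A_{p,k}(pn + j) = (-1)^j binom(p - 1, j) A_{p,k}(pn) modulo p^s for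
  j < p, and this binomial coefficient is prime to p. Two integers of valuation at most s that
  agree modulo p^s up to a p-adic unit have the same valuation.
\<close>

definition lacunary_mod :: "nat \<Rightarrow> 'a :: comm_semiring_1 \<Rightarrow> 'a fps \<Rightarrow> bool" where
  "lacunary_mod p M f \<longleftrightarrow> (\<forall>n. \<not> p dvd n \<longrightarrow> M dvd f $ n)"

lemma lacunary_mod_1: "lacunary_mod p M 1"
  unfolding lacunary_mod_def by auto

lemma lacunary_mod_mult:
  assumes "lacunary_mod p M f" "lacunary_mod p M g"
  shows "lacunary_mod p M (f * g)"
  unfolding lacunary_mod_def fps_mult_nth
proof (intro allI impI dvd_sum)
  fix n i assume n: "\<not> p dvd n" and i: "i \<in> {0..n}"
  then have "\<not> p dvd i \<or> \<not> p dvd (n - i)"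
    by (metis atLeastAtMost_iff dvd_add le_add_diff_inverse)
  then show "M dvd f $ i * g $ (n - i)"
    using assms unfolding lacunary_mod_def by auto
qed

lemma lacunary_mod_power: "lacunary_mod p M f \<Longrightarrow> lacunary_mod p M (f ^ k)"
  by (induction k) (auto intro: lacunary_mod_mult lacunary_mod_1)

lemma lacunary_mod_prod:
  "(\<And>i. i \<in> I \<Longrightarrow> lacunary_mod p M (f i)) \<Longrightarrow> lacunary_mod p M (prod f I)"
  by (induction I rule: infinite_finite_induct) (auto intro: lacunary_mod_mult lacunary_mod_1)

lemma lacunary_mod_mult_nth:
  fixes B R :: "'a :: comm_ring_1 fps"
  assumes "lacunary_mod p M R" "\<And>i. i \<ge> p \<Longrightarrow> B $ i = 0" "j < p"
  shows "M dvd (B * R) $ (p * n + j) - B $ j * R $ (p * n)"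
proof -
  have "(B * R) $ (p * n + j) - B $ j * R $ (p * n) =
      (\<Sum>i\<in>{0..p * n + j} - {j}. B $ i * R $ (p * n + j - i))"
    unfolding fps_mult_nth by (subst sum.remove[of _ j]) auto
  also have "M dvd \<dots>"
  proof (rule dvd_sum)
    fix i assume i: "i \<in> {0..p * n + j} - {j}"
    show "M dvd B $ i * R $ (p * n + j - i)"
    proof (cases "i < p")
      case True
      have "i \<noteq> j" "i \<le> p * n + j" using i by auto
      with True \<open>j < p\<close> have "\<not> p dvd (p * n + j - i)"
        by (metis add_implies_diff dvd_mult2 gcd_nat.eq_iff le_add2 mod_nat_eqI)
      then show ?thesis using assms(1) unfolding lacunary_mod_def by simp
    qed (simp add: assms(2))
  qed
  finally show ?thesis .
qed

lemma one_plus_X_power_mult_power: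
  "\<exists>H. (1 + fps_X ^ d * G :: 'a :: comm_ring_1 fps) ^ k = 1 + fps_X ^ d * H"
proof (induction k)
  case (Suc k)
  then obtain H where "(1 + fps_X ^ d * G :: 'a fps) ^ k = 1 + fps_X ^ d * H" by blast
  then show ?case
    by (intro exI[of _ "G + H + fps_X ^ d * G * H"]) (simp add: algebra_simps)
qed (intro exI[of _ 0], simp)

lemma geom_unfold:
  assumes "d \<ge> 1"
  shows "geom d = 1 + fps_X ^ d * geom d"
proof (rule fps_ext)
  fix n
  show "geom d $ n = (1 + fps_X ^ d * geom d) $ n"
  proof (cases "n < d")
    case False
    then have "d dvd n \<longleftrightarrow> d dvd (n - d)"
      by (metis dvd_add_triv_right_iff le_add_diff_inverse2 not_less)
    then show ?thesis using False assms by (auto simp: fps_X_power_mult_nth geom_def)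
  qed (use assms in \<open>auto simp: fps_X_power_mult_nth geom_def dvd_imp_le\<close>)
qed

lemma mult_geom_power_nth:
  assumes "d \<ge> 1" "m < d"
  shows "(f * geom d ^ k) $ m = f $ m"
proof -
  obtain H where "geom d ^ k = 1 + fps_X ^ d * H"
    using one_plus_X_power_mult_power geom_unfold[OF assms(1)] by metis
  then have "f * geom d ^ k = f + fps_X ^ d * (f * H)" by (simp add: algebra_simps)
  then show ?thesis using assms(2) by (simp add: fps_X_power_mult_nth)
qed

lemma A_eq_prod_nth:
  assumes "p \<ge> 2" "m \<le> N"
  shows "A p k m = (\<Prod>i\<le>N. geom (p ^ i) ^ k) $ m"
  using assms(2)
proof (induction N rule: dec_induct)
  case (step N)
  have "m < 2 ^ N"
    using \<open>m \<le> N\<close> less_exp[of N] by linarith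
  also have "\<dots> < 2 ^ Suc N" by simp
  also have "\<dots> \<le> p ^ Suc N" by (rule power_mono[OF assms(1)]) simp
  finally show ?case
    using step.IH assms(1) by (simp add: mult_geom_power_nth)
qed (simp add: A_def)

lemma geom_1_power_nth: "(geom 1 ^ Suc N) $ n = int ((N + n) choose n)"
proof (induction N arbitrary: n)
  case (Suc N)
  have "(geom 1 ^ Suc (Suc N)) $ n = (\<Sum>i\<le>n. int ((N + i) choose i))"
    unfolding power_Suc2[of _ "Suc N"] fps_mult_nth Suc by (simp add: geom_def atLeast0AtMost)
  also have "\<dots> = int ((Suc N + n) choose n)"
    by (simp flip: of_nat_sum add: sum_choose_lower)
  finally show ?case .
qed (simp add: geom_def)

lemma one_minus_X_times_geom_1: "(1 - fps_X) * geom 1 = (1 :: int fps)"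
  by (auto simp: fps_eq_iff geom_def algebra_simps)

lemma geom_1_power_eq: "geom 1 ^ k = (1 - fps_X) ^ e * geom 1 ^ (k + e)"
proof -
  have "(1 - fps_X) ^ e * geom 1 ^ (k + e) = ((1 - fps_X) * geom 1) ^ e * geom 1 ^ k"
    by (simp only: power_add power_mult_distrib mult_ac)
  also have "\<dots> = geom 1 ^ k"
    by (simp only: one_minus_X_times_geom_1 power_one mult_1_left)
  finally show ?thesis by (rule sym)
qed

lemma one_minus_X_power_nth:
  "((1 - fps_X) ^ m :: 'a :: comm_ring_1 fps) $ i = (-1) ^ i * of_nat (m choose i)"
proof (induction m arbitrary: i)
  case 0
  then show ?case by (cases i) simp_all
next
  case (Suc m)
  have "((1 - fps_X) ^ Suc m :: 'a fps) = (1 - fps_X) ^ m - fps_X * (1 - fps_X) ^ m"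
    by (simp add: algebra_simps)
  then show ?case using Suc by (cases i) (simp_all add: algebra_simps)
qed

lemma lacunary_mod_geom: "p dvd d \<Longrightarrow> lacunary_mod p M (geom d)"
  unfolding lacunary_mod_def geom_def by (auto dest: dvd_trans)

lemma lacunary_mod_geom_1_power:
  assumes "prime p"
  shows "lacunary_mod p (int p ^ s) (geom 1 ^ (p ^ s))"
  unfolding lacunary_mod_def
proof (intro allI impI)
  fix n assume n: "\<not> p dvd n"
  obtain N where N: "p ^ s = Suc N"
    using assms by (metis gr0_implies_Suc prime_gt_0_nat zero_less_power)
  obtain b where b: "n = Suc b"
    using n by (cases n) auto
  have "p ^ s * ((N + n) choose Suc N) = n * ((N + n) choose N)"
    unfolding N b add_Suc_right by (rule Suc_times_binomial_add)
  moreover have "coprime (p ^ s) n"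
    using assms n by (simp add: prime_imp_coprime)
  ultimately have "p ^ s dvd ((N + n) choose N)"
    by (metis coprime_dvd_mult_right_iff dvd_triv_left)
  then have "p ^ s dvd ((N + n) choose n)"
    using binomial_symmetric[of n "N + n"] by simp
  then have "int p ^ s dvd int ((N + n) choose n)"
    by (metis of_nat_dvd_iff of_nat_power)
  then show "int p ^ s dvd (geom 1 ^ p ^ s) $ n"
    unfolding N geom_1_power_nth .
qed

lemma not_prime_dvd_choose:
  assumes "prime p" "j < p"
  shows "\<not> p dvd ((p - 1) choose j)"
proof
  assume "p dvd ((p - 1) choose j)"
  moreover have "fact j * fact (p - 1 - j) * ((p - 1) choose j) = (fact (p - 1) :: nat)"
    using assms(2) by (intro binomial_fact_lemma) simp
  then have "((p - 1) choose j) dvd fact (p - 1)" by (metis dvd_triv_right)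
  ultimately have "p dvd fact (p - 1)" by (rule dvd_trans)
  then show False
    using prime_dvd_fact_iff[OF assms(1)] prime_gt_0_nat[OF assms(1)] by simp
qed

lemma prod_geom_power_eq:
  fixes e w :: nat
  assumes "w \<ge> 1"
  defines "k \<equiv> e * (w - 1)"
  shows "(\<Prod>i\<le>N. geom (m ^ i) ^ k) =
    (1 - fps_X) ^ e * (geom 1 ^ (e * w) * (\<Prod>i\<in>{1..N}. geom (m ^ i) ^ k))"
proof -
  have "{..N} = insert 0 {1..N}" by auto
  then have "(\<Prod>i\<le>N. geom (m ^ i) ^ k) = geom 1 ^ k * (\<Prod>i\<in>{1..N}. geom (m ^ i) ^ k)"
    by simp
  moreover have "e * w = k + e"
    using assms(1) by (cases w) (simp_all add: k_def)
  ultimately show ?thesis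
    by (simp only: geom_1_power_eq[of k e] mult.assoc)
qed

lemma lacunary_mod_geom_power_prod:
  assumes "prime p" "p ^ s dvd w"
  shows "lacunary_mod p (int p ^ s) (geom 1 ^ (e * w) * (\<Prod>i\<in>{1..N}. geom (p ^ i) ^ k))"
proof (rule lacunary_mod_mult)
  obtain v where "w = p ^ s * v"
    using assms(2) by (auto elim: dvdE)
  then have "geom 1 ^ (e * w) = (geom 1 ^ p ^ s) ^ (e * v)"
    by (simp add: mult.left_commute flip: power_mult)
  then show "lacunary_mod p (int p ^ s) (geom 1 ^ (e * w))"
    using lacunary_mod_power[OF lacunary_mod_geom_1_power[OF assms(1)]] by simp
  show "lacunary_mod p (int p ^ s) (\<Prod>i\<in>{1..N}. geom (p ^ i) ^ k)"
    by (intro lacunary_mod_prod lacunary_mod_power lacunary_mod_geom) simp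
qed

lemma A_cong:
  assumes "prime p" "w \<ge> 1" "p ^ s dvd w" "j < p"
  defines "k \<equiv> (p - 1) * (w - 1)"
  shows "int p ^ s dvd A p k (p * n + j) - (-1) ^ j * int ((p - 1) choose j) * A p k (p * n)"
proof -
  define N where "N = p * n + p"
  define B where "B = ((1 - fps_X) ^ (p - 1) :: int fps)"
  define R where "R = geom 1 ^ ((p - 1) * w) * (\<Prod>i\<in>{1..N}. geom (p ^ i) ^ k)"
  have A_eq: "A p k (p * n + i) = (B * R) $ (p * n + i)" if "i < p" for i
  proof -
    have "p * n + i \<le> N" using that by (simp add: N_def)
    then show ?thesis
      using A_eq_prod_nth[OF prime_ge_2_nat[OF assms(1)], of _ N k]
        prod_geom_power_eq[OF assms(2), where e = "p - 1" and m = p and N = N]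
      by (simp only: B_def R_def k_def)
  qed
  have "lacunary_mod p (int p ^ s) R"
    unfolding R_def using assms(1,3) by (rule lacunary_mod_geom_power_prod)
  moreover have B_nth: "B $ i = (-1) ^ i * int ((p - 1) choose i)" for i
    unfolding B_def one_minus_X_power_nth by simp
  moreover have "B $ i = 0" if "i \<ge> p" for i
    using that prime_gt_0_nat[OF assms(1)] by (simp add: B_nth)
  ultimately have "int p ^ s dvd A p k (p * n + j) - B $ j * R $ (p * n)"
    and "int p ^ s dvd A p k (p * n) - R $ (p * n)"
    using lacunary_mod_mult_nth[of p _ R B j n] lacunary_mod_mult_nth[of p _ R B 0 n]
      A_eq[of 0] A_eq[OF assms(4)] assms(4) prime_gt_0_nat[OF assms(1)] by auto
  then have "int p ^ s dvd (A p k (p * n + j) - B $ j * R $ (p * n))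
      - B $ j * (A p k (p * n) - R $ (p * n))"
    by (simp add: dvd_diff)
  then show ?thesis by (simp add: B_nth algebra_simps)
qed

lemma multiplicity_eq_if_dvd_diff:
  fixes q a b c :: "'a :: factorial_ring_gcd"
  assumes "prime q" "a \<noteq> 0" "b \<noteq> 0"
    and "multiplicity q a \<le> s" "multiplicity q b \<le> s"
    and "\<not> q dvd c" "q ^ s dvd b - c * a"
  shows "multiplicity q b = multiplicity q a"
proof -
  have not_unit: "\<not> is_unit q" using assms(1) by (simp add: not_prime_unit)
  have dvd_iff: "q ^ t dvd a \<longleftrightarrow> q ^ t dvd b" if "t \<le> s" for t
  proof -
    have "q ^ t dvd b - c * a" using assms(7) that by (meson dvd_trans le_imp_power_dvd)
    moreover have "coprime (q ^ t) c" using assms(1,6) by (simp add: prime_imp_coprime)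
    ultimately show ?thesis
      by (metis coprime_dvd_mult_right_iff diff_add_cancel dvd_add_right_iff)
  qed
  have "q ^ multiplicity q a dvd b" "q ^ multiplicity q b dvd a"
    using dvd_iff assms(4,5) multiplicity_dvd by blast+
  then show ?thesis using multiplicity_geI assms(2,3) not_unit by (metis le_antisym)
qed

lemma nu_eq_if_dvd_diff:
  assumes "prime p" "nu p a \<le> enat s" "nu p b \<le> enat s"
    and "\<not> int p dvd c" "int p ^ s dvd b - c * a"
  shows "nu p b = nu p a"
  using assms multiplicity_eq_if_dvd_diff[of "int p" a b s c]
  by (auto simp: nu_def split: if_splits)

theorem theorem3p1:
  fixes p u s :: nat
  assumes "prime p" and "p \<ge> 3"
    and "1 \<le> u" and "u \<le> p - 1"
    and "s \<ge> 2"
    and "\<forall>m::nat. m > u * p ^ s \<longrightarrow> nu p (A p ((p - 1) * (u * p ^ s - 1)) m) \<le> enat s"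
  shows "\<forall>n::nat. n > u * p ^ s \<longrightarrow>
    (\<forall>j < p. nu p (A p ((p - 1) * (u * p ^ s - 1)) (p * n + j))
              = nu p (A p ((p - 1) * (u * p ^ s - 1)) (p * n)))"
proof (intro allI impI)
  fix n j assume n: "n > u * p ^ s" and j: "j < p"
  let ?A = "A p ((p - 1) * (u * p ^ s - 1))"
  have "n \<le> p * n" using prime_gt_0_nat[OF assms(1)] by simp
  then have "p * n > u * p ^ s" "p * n + j > u * p ^ s" using n by linarith+
  then have bounds: "nu p (?A (p * n)) \<le> enat s" "nu p (?A (p * n + j)) \<le> enat s"
    using assms(6) by blast+
  have "u * p ^ s \<ge> 1"
    using assms(3) prime_gt_0_nat[OF assms(1)] by (simp add: Suc_le_eq)
  from A_cong[OF assms(1) this _ j]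
  have "int p ^ s dvd ?A (p * n + j) - (-1) ^ j * int ((p - 1) choose j) * ?A (p * n)"
    by simp
  moreover have "\<not> int p dvd (-1) ^ j * int ((p - 1) choose j)"
    using not_prime_dvd_choose[OF assms(1) j] by (simp add: dvd_mult_unit_iff')
  ultimately show "nu p (?A (p * n + j)) = nu p (?A (p * n))"
    using nu_eq_if_dvd_diff[OF assms(1) bounds] by blast
qed

end
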